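(* Let $\mathfrak{g}$ be a complex filiform Lie algebra of nilpotency class $c\ge 5$. Then $\mathfrak{g}$ does not admit a periodic prederivation.
   Context: A nilpotent Lie algebra of dimension $n$ is filiform if its nilpotency class is $n-1$. A linear map $P:\mathfrak{g}\to\mathfrak{g}$ is a prederivation if $P([x,[y,z]])=[P(x),[y,z]]+[x,[P(y),z]]+[x,[y,P(z)]]$ for all $x,y,z\in\mathfrak{g}$; it is periodic if $P^m=\mathrm{id}$ for some integer $m\ge 1$. *)

theory Defs
  imports Complex_Main
begin

definition complex_lie_algebra ::
  "(complex \<Rightarrow> 'v::ab_group_add \<Rightarrow> 'v) \<Rightarrow> ('v \<Rightarrow> 'v \<Rightarrow> 'v) \<Rightarrow> bool" where
  "complex_lie_algebra sc br \<longleftrightarrow>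
     vector_space sc \<and>
     (\<forall>x. Vector_Spaces.linear sc sc (br x)) \<and>
     (\<forall>y. Vector_Spaces.linear sc sc (\<lambda>x. br x y)) \<and>
     (\<forall>x. br x x = 0) \<and>
     (\<forall>x y z. br x (br y z) + br y (br z x) + br z (br x y) = 0)"

definition finite_dim :: "(complex \<Rightarrow> 'v::ab_group_add \<Rightarrow> 'v) \<Rightarrow> bool" where
  "finite_dim sc \<longleftrightarrow> (\<exists>B. finite B \<and> module.span sc B = UNIV)"

text \<open>Lower central series: lcs 0 = g (= g^1), lcs (k+1) = [g, lcs k] (= g^(k+2)).\<close>

fun lcs :: "(complex \<Rightarrow> 'v::ab_group_add \<Rightarrow> 'v) \<Rightarrow> ('v \<Rightarrow> 'v \<Rightarrow> 'v) \<Rightarrow> nat \<Rightarrow> 'v set" where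
  "lcs sc br 0 = UNIV"
| "lcs sc br (Suc k) = module.span sc {br x y | x y. y \<in> lcs sc br k}"

definition nilpotency_class ::
  "(complex \<Rightarrow> 'v::ab_group_add \<Rightarrow> 'v) \<Rightarrow> ('v \<Rightarrow> 'v \<Rightarrow> 'v) \<Rightarrow> nat \<Rightarrow> bool" where
  "nilpotency_class sc br c \<longleftrightarrow> c \<ge> 1 \<and> lcs sc br c = {0} \<and> lcs sc br (c - 1) \<noteq> {0}"

definition filiform ::
  "(complex \<Rightarrow> 'v::ab_group_add \<Rightarrow> 'v) \<Rightarrow> ('v \<Rightarrow> 'v \<Rightarrow> 'v) \<Rightarrow> bool" where
  "filiform sc br \<longleftrightarrow> nilpotency_class sc br (vector_space.dim sc (UNIV :: 'v set) - 1)"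

definition prederivation ::
  "(complex \<Rightarrow> 'v::ab_group_add \<Rightarrow> 'v) \<Rightarrow> ('v \<Rightarrow> 'v \<Rightarrow> 'v) \<Rightarrow> ('v \<Rightarrow> 'v) \<Rightarrow> bool" where
  "prederivation sc br P \<longleftrightarrow> Vector_Spaces.linear sc sc P \<and>
     (\<forall>x y z. P (br x (br y z)) = br (P x) (br y z) + br x (br (P y) z) + br x (br y (P z)))"

definition periodic :: "('v \<Rightarrow> 'v) \<Rightarrow> bool" where
  "periodic P \<longleftrightarrow> (\<exists>m::nat. m \<ge> 1 \<and> P ^^ m = id)"

end

theory Submission
  imports Defs
begin

text \<open>The eigenvalues of a periodic linear map \<open>P\<close> are roots of unity and \<open>g\<close> is the sum of the
  eigenspaces. If \<open>P\<close> is a prederivation, \<open>[x, [y, z]]\<close> is an eigenvector for the sum of the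
  eigenvalues of \<open>x, y, z\<close>; as three points of the unit circle never form a proper arithmetic
  progression, long iterated brackets of eigenvectors must vanish or their eigenvalues must cancel.
  In a filiform algebra each \<open>g^k/g^(k+1)\<close> (\<open>k \<ge> 2\<close>) is a line, and the iterated brackets
  that must survive are controlled by the subspaces \<open>C k = {z. [z, g^(k+1)] \<subseteq> g^(k+3)}\<close>.
  This yields eigenvectors \<open>x \<notin> C 2\<close> and \<open>y \<in> C 2 - C 3\<close> with opposite eigenvalues \<open>\<alpha>, -\<alpha>\<close>.
  For \<open>w = [x, y]\<close> the bracket \<open>[w, [x, w]]\<close> lies outside \<open>g^6\<close>, yet it is an \<open>\<alpha>\<close>-eigenvector, and
  the \<open>\<alpha>\<close>-component of its expansion along the eigencomponents of \<open>w\<close> lies in \<open>g^6\<close>.\<close>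

section \<open>Roots of unity and the unit circle\<close>

lemma unit_circle_arith_progression:
  fixes a d :: complex
  assumes "norm a = 1" "norm (a + d) = 1" "norm (a + 2 * d) = 1"
  shows "d = 0"
proof -
  have sq: "(Re z)\<^sup>2 + (Im z)\<^sup>2 = 1" if "norm z = 1" for z :: complex
    using that by (simp add: cmod_def)
  have "2 * ((Re d)\<^sup>2 + (Im d)\<^sup>2) = (Re (a + 2 * d))\<^sup>2 + (Im (a + 2 * d))\<^sup>2
      - 2 * ((Re (a + d))\<^sup>2 + (Im (a + d))\<^sup>2) + ((Re a)\<^sup>2 + (Im a)\<^sup>2)"
    by (simp add: power2_eq_square algebra_simps)
  also have "\<dots> = 0"
    by (simp only: sq[OF assms(1)] sq[OF assms(2)] sq[OF assms(3)])
  finally have "(Re d)\<^sup>2 + (Im d)\<^sup>2 = 0"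
    by (simp only: mult_eq_0_iff) simp
  then show "d = 0"
    by (simp add: complex_eq_iff)
qed

lemma sum_roots_unity_power:
  assumes "0 < m" "k < m"
  shows "(\<Sum>\<zeta> | \<zeta> ^ m = 1. \<zeta> ^ k :: complex) = (if k = 0 then of_nat m else 0)"
proof -
  define \<omega> where "\<omega> j = cis (2 * pi * real j / real m)" for j
  have bij: "bij_betw \<omega> {..<m} {\<zeta>. \<zeta> ^ m = 1}"
    unfolding \<omega>_def using bij_betw_roots_unity[OF assms(1)] .
  have "(\<Sum>\<zeta> | \<zeta> ^ m = 1. \<zeta> ^ k) = (\<Sum>j<m. \<omega> j ^ k)"
    by (rule sum.reindex_bij_betw[OF bij, symmetric])
  also have "\<dots> = (\<Sum>j<m. \<omega> k ^ j)"
    by (simp add: \<omega>_def DeMoivre algebra_simps)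
  also have "\<dots> = (if k = 0 then of_nat m else 0)"
  proof (cases "k = 0")
    case False
    have "\<omega> k \<noteq> \<omega> 0"
      using bij_betw_imp_inj_on[OF bij] assms False by (auto dest: inj_onD)
    moreover have "\<omega> k ^ m = 1"
      using bij_betwE[OF bij] assms(2) by auto
    ultimately show ?thesis
      using False by (simp add: geometric_sum \<omega>_def)
  qed (simp add: \<omega>_def)
  finally show ?thesis .
qed

lemma sum_roots_unity_inverse_power:
  assumes "0 < m" "k < m"
  shows "(\<Sum>\<zeta> | \<zeta> ^ m = 1. inverse \<zeta> ^ k :: complex) = (if k = 0 then of_nat m else 0)"
proof -
  have "bij_betw inverse {\<zeta> :: complex. \<zeta> ^ m = 1} {\<zeta>. \<zeta> ^ m = 1}"
    by (rule bij_betw_byWitness[where f' = inverse]) (auto simp: power_inverse)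
  then have "(\<Sum>\<zeta> | \<zeta> ^ m = 1. inverse \<zeta> ^ k) = (\<Sum>\<zeta> | \<zeta> ^ m = 1. \<zeta> ^ k :: complex)"
    by (rule sum.reindex_bij_betw)
  with sum_roots_unity_power[OF assms] show ?thesis by simp
qed

lemma (in vector_space) subspace_scale_iff:
  assumes "subspace S" "c \<noteq> 0"
  shows "scale c x \<in> S \<longleftrightarrow> x \<in> S"
  using subspace_scale[OF assms(1), of "scale c x" "inverse c"] subspace_scale[OF assms(1), of x c]
    assms(2) by auto

section \<open>Lie algebras and the lower central series\<close>

locale lie_algebra = vector_space sc
  for sc :: "complex \<Rightarrow> 'v::ab_group_add \<Rightarrow> 'v" +
  fixes br :: "'v \<Rightarrow> 'v \<Rightarrow> 'v"
  assumes linear_bracket_right: "\<And>x. Vector_Spaces.linear sc sc (br x)"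
    and linear_bracket_left: "\<And>y. Vector_Spaces.linear sc sc (\<lambda>x. br x y)"
    and bracket_self [simp]: "\<And>x. br x x = 0"
    and jacobi: "\<And>x y z. br x (br y z) + br y (br z x) + br z (br x y) = 0"
begin

lemma module_hom_bracket_right: "module_hom sc sc (br x)"
  by (rule module_hom_linearI[OF linear_bracket_right])

lemma module_hom_bracket_left: "module_hom sc sc (\<lambda>x. br x y)"
  by (rule module_hom_linearI[OF linear_bracket_left])

lemmas bracket_add_right = module_hom.add[OF module_hom_bracket_right]
  and bracket_scale_right = module_hom.scale[OF module_hom_bracket_right]
  and bracket_zero_right [simp] = module_hom.zero[OF module_hom_bracket_right]
  and bracket_neg_right = module_hom.neg[OF module_hom_bracket_right]
  and bracket_diff_right = module_hom.diff[OF module_hom_bracket_right]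
  and bracket_sum_right = module_hom.sum[OF module_hom_bracket_right]
  and bracket_add_left = module_hom.add[OF module_hom_bracket_left]
  and bracket_scale_left = module_hom.scale[OF module_hom_bracket_left]
  and bracket_zero_left [simp] = module_hom.zero[OF module_hom_bracket_left]
  and bracket_neg_left = module_hom.neg[OF module_hom_bracket_left]
  and bracket_diff_left = module_hom.diff[OF module_hom_bracket_left]
  and bracket_sum_left = module_hom.sum[OF module_hom_bracket_left]

lemmas bracket_simps = bracket_add_right bracket_add_left bracket_scale_right bracket_scale_left
  bracket_neg_right bracket_neg_left bracket_diff_right bracket_diff_left

lemma bracket_antisym: "br y x = - br x y"
proof -
  have "br x y + br y x = br x x + br y x + (br x y + br y y)"
    by (simp add: add.commute)
  also have "\<dots> = br (x + y) (x + y)"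
    by (simp only: bracket_add_left bracket_add_right)
  finally have "br x y + br y x = 0"
    by simp
  then show ?thesis by (simp add: eq_neg_iff_add_eq_0 add.commute)
qed

lemma jacobi_left: "br (br x y) z = br x (br y z) - br y (br x z)"
  using jacobi[of x y z] bracket_antisym[of z x] bracket_antisym[of "br x y" z]
  by (simp add: bracket_neg_right algebra_simps)

text \<open>Indexing: \<open>L k\<close> is the term \<open>g^(k+1)\<close> of the lower central series, so \<open>L 0 = g\<close>.\<close>

abbreviation L :: "nat \<Rightarrow> 'v set" where "L k \<equiv> lcs sc br k"

lemma lcs_Suc_eq: "L (Suc k) = span {br x y | x y. y \<in> L k}"
  by simp

declare lcs.simps(2) [simp del]

lemma subspace_lcs: "subspace (L k)"
  by (cases k) (simp_all add: lcs_Suc_eq)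

lemma span_lcs [simp]: "span (L k) = L k"
  by (simp add: span_eq_iff subspace_lcs)

lemma zero_in_lcs [simp]: "0 \<in> L k"
  by (rule subspace_0[OF subspace_lcs])

lemma bracket_lcs_right: "y \<in> L k \<Longrightarrow> br x y \<in> L (Suc k)"
  unfolding lcs_Suc_eq by (auto intro: span_base)

lemma bracket_lcs_left: "x \<in> L k \<Longrightarrow> br x y \<in> L (Suc k)"
  using subspace_neg[OF subspace_lcs bracket_lcs_right[of x k y]] by (simp add: bracket_antisym[of x y])

lemma lcs_Suc_subset: "L (Suc k) \<subseteq> L k"
proof (induction k)
  case (Suc k)
  then have "{br x y | x y. y \<in> L (Suc k)} \<subseteq> L (Suc k)"
    using bracket_lcs_right by blast
  then show ?case
    unfolding lcs_Suc_eq[of "Suc k"] by (rule span_minimal[OF _ subspace_lcs])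
qed simp

lemma lcs_antimono: "j \<le> k \<Longrightarrow> L k \<subseteq> L j"
  by (induction k rule: dec_induct) (use lcs_Suc_subset in auto)

lemma bracket_lcs_lcs: "a \<in> L i \<Longrightarrow> b \<in> L j \<Longrightarrow> br a b \<in> L (i + j + 1)"
proof (induction i arbitrary: a j b)
  case 0
  then show ?case using bracket_lcs_right by simp
next
  case (Suc i)
  let ?S = "{a. \<forall>j b. b \<in> L j \<longrightarrow> br a b \<in> L (Suc i + j + 1)}"
  have "subspace ?S"
    by (rule subspaceI)
      (auto simp: bracket_add_left bracket_scale_left
        intro!: subspace_add[OF subspace_lcs] subspace_scale[OF subspace_lcs])
  moreover have "br p q \<in> ?S" if q: "q \<in> L i" for p q
  proof (intro CollectI allI impI)
    fix j b assume b: "b \<in> L j"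
    have "br p (br q b) \<in> L (Suc i + j + 1)"
      using bracket_lcs_right[OF Suc.IH[OF q b]] by simp
    moreover have "br q (br p b) \<in> L (Suc i + j + 1)"
      using Suc.IH[OF q bracket_lcs_right[OF b]] by simp
    ultimately show "br (br p q) b \<in> L (Suc i + j + 1)"
      unfolding jacobi_left by (rule subspace_diff[OF subspace_lcs])
  qed
  ultimately have "span {br p q | p q. q \<in> L i} \<subseteq> ?S"
    by (intro span_minimal) auto
  then show ?case
    using Suc.prems unfolding lcs_Suc_eq by blast
qed

lemma lcs_eq_lcs_Suc_stable:
  assumes "L (Suc k) = L k" "k \<le> j"
  shows "L j = L k"
  using assms(2)
proof (induction j rule: dec_induct)
  case (step j)
  have "L (Suc j) = span {br x y | x y. y \<in> L k}"
    using step.IH by (simp add: lcs_Suc_eq)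
  also have "\<dots> = L k"
    using assms(1) by (simp add: lcs_Suc_eq)
  finally show ?case .
qed simp

lemma nilpotency_class_unique:
  assumes "nilpotency_class sc br c1" "nilpotency_class sc br c2"
  shows "c1 = c2"
proof -
  have False if a: "nilpotency_class sc br a" and b: "nilpotency_class sc br b" and "a < b" for a b
  proof -
    have "L (b - 1) \<subseteq> L a"
      using \<open>a < b\<close> by (intro lcs_antimono) simp
    then show False
      using a b subspace_0[OF subspace_lcs, of "b - 1"] unfolding nilpotency_class_def by blast
  qed
  then show ?thesis
    using assms by (metis linorder_neqE_nat)
qed

lemma subspace_bracket_left_vimage: "subspace S \<Longrightarrow> subspace {a. br a b \<in> S}"
  using module_hom.subspace_vimage[OF module_hom_bracket_left] by (simp add: vimage_def)

lemma subspace_bracket_right_vimage: "subspace S \<Longrightarrow> subspace {b. br a b \<in> S}"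
  using module_hom.subspace_vimage[OF module_hom_bracket_right] by (simp add: vimage_def)

text \<open>Modulo \<open>g^3\<close> the bracket only depends on the classes modulo \<open>g^2\<close>, so a spanning set of
  \<open>g/g^2\<close> whose brackets lie in \<open>g^3\<close> forces \<open>[g, g] \<subseteq> g^3\<close>.\<close>

lemma bracket_in_lcs2_if_generators:
  assumes span_G: "span (G \<union> L 1) = UNIV"
    and G: "\<And>g h. g \<in> G \<Longrightarrow> h \<in> G \<Longrightarrow> br g h \<in> L 2"
  shows "br a b \<in> L 2"
proof -
  have L1_left: "br u v \<in> L 2" and L1_right: "br v u \<in> L 2" if "u \<in> L 1" for u v
    using bracket_lcs_left[OF that, of v] bracket_lcs_right[OF that, of v]
    by (simp_all add: numeral_2_eq_2)
  have left: "br u h \<in> L 2" if h: "h \<in> G" for u h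
  proof -
    have "span (G \<union> L 1) \<subseteq> {u. br u h \<in> L 2}"
      using G[OF _ h] L1_left
      by (intro span_minimal subspace_bracket_left_vimage[OF subspace_lcs]) auto
    then show ?thesis using span_G by auto
  qed
  have "span (G \<union> L 1) \<subseteq> {v. br a v \<in> L 2}"
    using left L1_right
    by (intro span_minimal subspace_bracket_right_vimage[OF subspace_lcs]) auto
  then show ?thesis using span_G by auto
qed

text \<open>The \<open>z\<close> for which \<open>ad z\<close> induces the zero map \<open>g^(k+1)/g^(k+2) \<rightarrow> g^(k+2)/g^(k+3)\<close>.\<close>

definition lcs_centralizer :: "nat \<Rightarrow> 'v set" where
  "lcs_centralizer k = {z. \<forall>a \<in> L k. br z a \<in> L (k + 2)}"

lemma subspace_lcs_centralizer: "subspace (lcs_centralizer k)"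
  unfolding lcs_centralizer_def
  by (rule subspaceI)
    (auto simp: bracket_add_left bracket_scale_left
      intro!: subspace_add[OF subspace_lcs] subspace_scale[OF subspace_lcs])

lemma lcs1_subset_lcs_centralizer: "L 1 \<subseteq> lcs_centralizer k"
  unfolding lcs_centralizer_def using bracket_lcs_lcs[of _ 1 _ k] by (auto simp: add.commute)

end

section \<open>Filiform Lie algebras\<close>

locale filiform_lie_algebra = lie_algebra sc br + finite_dimensional_vector_space sc Basis
  for sc :: "complex \<Rightarrow> 'v::ab_group_add \<Rightarrow> 'v" and br and Basis :: "'v set" +
  fixes c :: nat
  assumes nilpotency_class: "nilpotency_class sc br c"
    and class_eq_dim: "c = dim UNIV - 1"
    and three_le_class: "3 \<le> c"
begin

lemma dim_UNIV_eq: "dim UNIV = Suc c"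
  using class_eq_dim three_le_class by simp

lemma span_eq_UNIV_iff_dim: "span S = UNIV \<longleftrightarrow> dim S = Suc c"
  using dim_eq_full[of S] dim_UNIV_eq by (simp add: dimension_def dim_UNIV)

lemma lcs_Suc_psubset:
  assumes "k < c"
  shows "L (Suc k) \<subset> L k"
proof -
  have "L (Suc k) \<noteq> L k"
  proof
    assume eq: "L (Suc k) = L k"
    have "L c = L k" "L (c - 1) = L k"
      using assms lcs_eq_lcs_Suc_stable[OF eq, of c] lcs_eq_lcs_Suc_stable[OF eq, of "c - 1"]
      by simp_all
    then show False
      using nilpotency_class unfolding nilpotency_class_def by simp
  qed
  then show ?thesis using lcs_Suc_subset by blast
qed

lemma dim_lcs_Suc_less: "k < c \<Longrightarrow> dim (L (Suc k)) < dim (L k)"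
  using dim_psubset[of "L (Suc k)" "L k"] lcs_Suc_psubset by (simp add: subspace_lcs)

lemma dim_insert_lcs: "x \<notin> L k \<Longrightarrow> dim (insert x (L k)) = dim (L k) + 1"
  using dim_insert[of x "L k"] by (simp add: subspace_lcs)

lemma brackets_not_all_in_lcs2:
  assumes "span (G \<union> L 1) = UNIV"
  obtains g h where "g \<in> G" "h \<in> G" "br g h \<notin> L 2"
proof -
  have "L 1 \<subseteq> L 2" if "\<And>g h. g \<in> G \<Longrightarrow> h \<in> G \<Longrightarrow> br g h \<in> L 2"
    unfolding One_nat_def lcs_Suc_eq[of 0]
    using bracket_in_lcs2_if_generators[OF assms that]
    by (intro span_minimal[OF _ subspace_lcs]) auto
  moreover have "\<not> L 1 \<subseteq> L 2"
    using lcs_Suc_psubset[of 1] three_le_class by (auto simp: numeral_2_eq_2)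
  ultimately show ?thesis using that by blast
qed

text \<open>The lower central series descends by exactly one dimension per step: \<open>c + 1\<close> dimensions
  are shared among \<open>c\<close> strict descents, and the first descent is at least \<open>2\<close> because \<open>g/g^2\<close>
  cannot be spanned by a single element.\<close>

lemma dim_lcs1_le: "dim (L 1) \<le> c - 1"
proof (rule ccontr)
  assume "\<not> dim (L 1) \<le> c - 1"
  moreover have "dim (L 1) < Suc c"
    using dim_lcs_Suc_less[of 0] three_le_class dim_UNIV_eq by simp
  ultimately have dim_L1: "dim (L 1) = c" by simp
  obtain x where x: "x \<notin> L 1"
    using lcs_Suc_psubset[of 0] three_le_class by auto
  have "span ({x} \<union> L 1) = UNIV"
    using span_eq_UNIV_iff_dim dim_insert_lcs[OF x] dim_L1 by simp
  then show False
    by (rule brackets_not_all_in_lcs2) auto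
qed

lemma dim_lcs_ge: "t \<le> c \<Longrightarrow> t \<le> dim (L (c - t))"
proof (induction t)
  case (Suc t)
  have "dim (L (Suc (c - Suc t))) < dim (L (c - Suc t))"
    using Suc.prems by (intro dim_lcs_Suc_less) simp
  moreover have "Suc (c - Suc t) = c - t" using Suc.prems by simp
  ultimately show ?case using Suc by simp
qed simp

lemma dim_lcs_le: "1 \<le> k \<Longrightarrow> k \<le> c \<Longrightarrow> dim (L k) + (k - 1) \<le> dim (L 1)"
proof (induction k rule: dec_induct)
  case (step k)
  then show ?case using dim_lcs_Suc_less[of k] by simp
qed simp

lemma dim_lcs: "1 \<le> k \<Longrightarrow> k \<le> c \<Longrightarrow> dim (L k) = c - k"
  using dim_lcs_ge[of "c - k"] dim_lcs_le[of k] dim_lcs1_le by simp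

lemma span_insert_lcs_Suc:
  assumes "1 \<le> k" "k < c" "v \<in> L k" "v \<notin> L (Suc k)"
  shows "span (insert v (L (Suc k))) = L k"
proof (rule subspace_dim_equal)
  show "span (insert v (L (Suc k))) \<subseteq> L k"
    using assms lcs_Suc_subset[of k] by (intro span_minimal subspace_lcs) auto
  have "dim (span (insert v (L (Suc k)))) = dim (L (Suc k)) + 1"
    using dim_insert_lcs[OF assms(4)] by simp
  also have "\<dots> = dim (L k)"
    using dim_lcs[of k] dim_lcs[of "Suc k"] assms by simp
  finally show "dim (L k) \<le> dim (span (insert v (L (Suc k))))" by simp
qed (simp_all add: subspace_lcs)

lemma lcs_decompose:
  assumes "1 \<le> k" "k < c" "v \<in> L k" "v \<notin> L (Suc k)" "a \<in> L k"
  obtains t where "a - sc t v \<in> L (Suc k)"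
  using span_insert_lcs_Suc[OF assms(1-4)] assms(5) span_breakdown_eq[of a v "L (Suc k)"]
  by (auto simp: subspace_lcs)

lemma span_insert_lcs1_neq_UNIV: "span (insert x (L 1)) \<noteq> UNIV"
proof -
  have "dim (insert x (L 1)) \<le> dim (L 1) + 1"
    using dim_insert[of x "L 1"] by simp
  also have "\<dots> \<le> c" using dim_lcs1_le three_le_class by simp
  finally show ?thesis using span_eq_UNIV_iff_dim by simp
qed

lemma span_insert2_lcs1_eq_UNIV:
  assumes "x \<notin> L 1" "y \<notin> span (insert x (L 1))"
  shows "span (insert y (insert x (L 1))) = UNIV"
proof -
  have "dim (insert y (insert x (L 1))) = dim (L 1) + 2"
    using dim_insert[of y "insert x (L 1)"] dim_insert_lcs[OF assms(1)] assms(2) by simp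
  also have "\<dots> = Suc c" using dim_lcs[of 1] three_le_class by simp
  finally show ?thesis using span_eq_UNIV_iff_dim by simp
qed

lemma bracket_generators_notin_lcs2:
  assumes "span (insert y (insert x (L 1))) = UNIV"
  shows "br x y \<notin> L 2"
proof
  assume xy: "br x y \<in> L 2"
  have "span ({x, y} \<union> L 1) = UNIV"
    using assms by (simp add: insert_commute)
  then obtain g h where "g \<in> {x, y}" "h \<in> {x, y}" "br g h \<notin> L 2"
    by (rule brackets_not_all_in_lcs2)
  then show False
    using xy subspace_neg[OF subspace_lcs xy] by (auto simp: bracket_antisym[of x y])
qed

lemma lcs_centralizer_neq_UNIV: "Suc k < c \<Longrightarrow> lcs_centralizer k \<noteq> UNIV"
proof
  assume k: "Suc k < c" and UNIV: "lcs_centralizer k = UNIV"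
  have "L (Suc k) \<subseteq> L (Suc (Suc k))"
    unfolding lcs_Suc_eq[of k] using UNIV
    by (intro span_minimal[OF _ subspace_lcs]) (auto simp: lcs_centralizer_def)
  then show False
    using lcs_Suc_psubset[OF k] by blast
qed

lemma bracket_notin_lcs_centralizer:
  assumes k: "1 \<le> k" "Suc k < c" and z: "z \<notin> lcs_centralizer k"
    and v: "v \<in> L k" "v \<notin> L (Suc k)"
  shows "br z v \<notin> L (k + 2)"
proof
  assume zv: "br z v \<in> L (k + 2)"
  have "br z a \<in> L (k + 2)" if a: "a \<in> L k" for a
  proof -
    obtain t where t: "a - sc t v \<in> L (Suc k)"
      using lcs_decompose[OF k(1) _ v a] k by auto
    have "br z a = br z (a - sc t v) + sc t (br z v)"
      by (simp add: bracket_simps)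
    moreover have "br z (a - sc t v) \<in> L (k + 2)"
      using bracket_lcs_right[OF t] by simp
    ultimately show ?thesis
      using zv by (simp add: subspace_add[OF subspace_lcs] subspace_scale[OF subspace_lcs])
  qed
  then show False
    using z unfolding lcs_centralizer_def by blast
qed

lemma lcs_centralizer_span_insert:
  assumes x: "x \<notin> lcs_centralizer k" and z: "z \<in> lcs_centralizer k"
    and span: "z \<in> span (insert x (L 1))"
  shows "z \<in> L 1"
proof -
  obtain t where t: "z - sc t x \<in> L 1"
    using span span_breakdown_eq[of z x "L 1"] by auto
  have "sc t x = z - (z - sc t x)" by simp
  also have "\<dots> \<in> lcs_centralizer k"
    using t lcs1_subset_lcs_centralizer z by (blast intro: subspace_diff[OF subspace_lcs_centralizer])
  finally have "t = 0"
    using x subspace_scale_iff[OF subspace_lcs_centralizer[of k], of t x] by auto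
  then show ?thesis using t by simp
qed

text \<open>Unless \<open>z \<in> L 1\<close>, \<open>z\<close> and some \<open>x\<^sub>0 \<notin> lcs_centralizer 1\<close> span \<open>g/g^2\<close>, so
  \<open>v = [x\<^sub>0, [x\<^sub>0, z]]\<close> spans \<open>g^3/g^4\<close>, and \<open>[z, v] = [x\<^sub>0, [z, [x\<^sub>0, z]]] \<in> g^5\<close> because \<open>z \<in> lcs_centralizer 1\<close>.\<close>

lemma lcs_centralizer_1_subset_2: "lcs_centralizer 1 \<subseteq> lcs_centralizer 2"
proof
  fix z assume z: "z \<in> lcs_centralizer 1"
  obtain x0 where x0: "x0 \<notin> lcs_centralizer 1"
    using lcs_centralizer_neq_UNIV[of 1] three_le_class by auto
  show "z \<in> lcs_centralizer 2"
  proof (cases "z \<in> span (insert x0 (L 1))")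
    case True
    then show ?thesis
      using lcs_centralizer_span_insert[OF x0 z] lcs1_subset_lcs_centralizer by blast
  next
    case False
    have x0L: "x0 \<notin> L 1" using lcs1_subset_lcs_centralizer x0 by auto
    define w where "w = br x0 z"
    have w2: "w \<notin> L 2"
      unfolding w_def by (rule bracket_generators_notin_lcs2[OF span_insert2_lcs1_eq_UNIV[OF x0L False]])
    have w1: "w \<in> L 1" using bracket_lcs_right[of z 0 x0] w_def by simp
    define v where "v = br x0 w"
    have v3: "v \<notin> L 3"
      using bracket_notin_lcs_centralizer[of 1 x0 w] three_le_class x0 w1 w2 v_def
      by (simp add: eval_nat_numeral)
    have v2: "v \<in> L 2" using bracket_lcs_right[OF w1] v_def by (simp add: numeral_2_eq_2)
    have zv: "br z v \<in> L 4"
    proof -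
      have "br z v = br (br z x0) w + br x0 (br z w)"
        by (simp add: jacobi_left v_def)
      moreover have "br (br z x0) w = 0"
        by (simp add: w_def bracket_antisym[of x0 z] bracket_neg_right)
      moreover have "br z w \<in> L 3"
        using z w1 unfolding lcs_centralizer_def by (simp add: eval_nat_numeral)
      ultimately show ?thesis
        using bracket_lcs_right[of "br z w" 3 x0] by (simp add: eval_nat_numeral)
    qed
    show "z \<in> lcs_centralizer 2"
      unfolding lcs_centralizer_def
    proof (intro CollectI ballI)
      fix a assume a: "a \<in> L 2"
      obtain t where t: "a - sc t v \<in> L 3"
        using lcs_decompose[of 2 v a] three_le_class v2 v3 a by (auto simp: numeral_3_eq_3)
      have "br z a = br z (a - sc t v) + sc t (br z v)"
        by (simp add: bracket_simps)
      moreover have "br z (a - sc t v) \<in> L 4"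
        using bracket_lcs_right[OF t] by (simp add: eval_nat_numeral)
      ultimately show "br z a \<in> L (2 + 2)"
        using zv by (simp add: subspace_add[OF subspace_lcs] subspace_scale[OF subspace_lcs])
    qed
  qed
qed

end

section \<open>Eigenspace decomposition of a periodic linear map\<close>

locale periodic_linear_map = vector_space sc
  for sc :: "complex \<Rightarrow> 'v::ab_group_add \<Rightarrow> 'v" +
  fixes P :: "'v \<Rightarrow> 'v" and m :: nat
  assumes linear_P: "Vector_Spaces.linear sc sc P"
    and period_pos: "0 < m"
    and funpow_period: "P ^^ m = id"
begin

lemma module_hom_P: "module_hom sc sc P"
  by (rule module_hom_linearI[OF linear_P])

lemma module_hom_funpow: "module_hom sc sc (P ^^ k)"
proof (induction k)
  case 0
  show ?case using module_hom_linearI[OF linear_id] by (simp add: id_def)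
next
  case (Suc k)
  show ?case unfolding funpow.simps(2) by (rule module_hom_compose[OF Suc module_hom_P])
qed

lemmas P_scale = module_hom.scale[OF module_hom_P]
  and P_diff = module_hom.diff[OF module_hom_P]
  and P_sum = module_hom.sum[OF module_hom_P]

definition eigen :: "complex \<Rightarrow> 'v \<Rightarrow> bool" where
  "eigen \<mu> u \<longleftrightarrow> P u = sc \<mu> u"

lemma eigen_funpow: "eigen \<mu> u \<Longrightarrow> (P ^^ k) u = sc (\<mu> ^ k) u"
  by (induction k) (simp_all add: eigen_def P_scale mult.commute)

lemma eigen_root_of_unity: "eigen \<mu> u \<Longrightarrow> u \<noteq> 0 \<Longrightarrow> \<mu> ^ m = 1"
  using eigen_funpow[of \<mu> u m] funpow_period scale_left_diff_distrib[of "\<mu> ^ m" 1 u] by simp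

lemma eigen_norm: "eigen \<mu> u \<Longrightarrow> u \<noteq> 0 \<Longrightarrow> norm \<mu> = 1"
proof -
  assume "eigen \<mu> u" "u \<noteq> 0"
  then have "norm \<mu> ^ m = 1 ^ m"
    using eigen_root_of_unity by (simp add: norm_power[symmetric])
  then show ?thesis
    by (rule power_eq_imp_eq_base) (use period_pos in auto)
qed

lemma eigen_diff: "eigen \<mu> a \<Longrightarrow> eigen \<mu> b \<Longrightarrow> eigen \<mu> (a - b)"
  by (simp add: eigen_def P_diff scale_right_diff_distrib)

text \<open>Averaging \<open>\<zeta>^(-k) P^k\<close> over one period projects onto the \<open>\<zeta>\<close>-eigenspace.\<close>

definition eigenproj :: "complex \<Rightarrow> 'v \<Rightarrow> 'v" where
  "eigenproj \<zeta> u = sc (1 / of_nat m) (\<Sum>k<m. sc (inverse \<zeta> ^ k) ((P ^^ k) u))"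

lemma module_hom_eigenproj: "module_hom sc sc (eigenproj \<zeta>)"
  unfolding module_hom_iff
proof (intro conjI allI)
  show "module sc" "module sc"
    by (simp_all add: module_iff_vector_space vector_space_axioms)
  fix x y :: 'v and a :: complex
  show "eigenproj \<zeta> (x + y) = eigenproj \<zeta> x + eigenproj \<zeta> y"
    by (simp add: eigenproj_def module_hom.add[OF module_hom_funpow] scale_right_distrib sum.distrib)
  show "eigenproj \<zeta> (sc a x) = sc a (eigenproj \<zeta> x)"
    by (simp add: eigenproj_def module_hom.scale[OF module_hom_funpow] scale_sum_right mult.commute)
qed

lemma eigen_eigenproj:
  assumes "\<zeta> ^ m = 1"
  shows "eigen \<zeta> (eigenproj \<zeta> u)"
proof -
  define f where "f k = sc (inverse \<zeta> ^ k) ((P ^^ k) u)" for k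
  have \<zeta>: "\<zeta> \<noteq> 0" using assms period_pos by (auto simp: power_0_left)
  have shift: "P (f k) = sc \<zeta> (f (Suc k))" for k
    using \<zeta> by (simp add: f_def P_scale)
  have "(\<Sum>k<m. f (Suc k)) = (\<Sum>k<m. f k)"
    using sum.lessThan_Suc_shift[of f m] assms funpow_period
    by (simp add: f_def power_inverse add.commute)
  then have "P (\<Sum>k<m. f k) = sc \<zeta> (\<Sum>k<m. f k)"
    by (simp add: P_sum shift flip: scale_sum_right)
  then show ?thesis
    unfolding eigen_def eigenproj_def f_def[symmetric] by (simp add: P_scale)
qed

lemma eigenproj_eigen:
  assumes "\<zeta> ^ m = 1" "eigen \<mu> q"
  shows "eigenproj \<zeta> q = (if \<mu> = \<zeta> then q else 0)"
proof (cases "q = 0")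
  case True
  then show ?thesis by (simp add: eigenproj_def module_hom.zero[OF module_hom_funpow])
next
  case False
  define r where "r = inverse \<zeta> * \<mu>"
  have \<zeta>: "\<zeta> \<noteq> 0" using assms period_pos by (auto simp: power_0_left)
  have "r ^ m = 1"
    using assms eigen_root_of_unity[OF assms(2) False] by (simp add: r_def power_mult_distrib power_inverse)
  moreover have "r = 1 \<longleftrightarrow> \<mu> = \<zeta>" using \<zeta> by (auto simp: r_def field_simps)
  moreover have "eigenproj \<zeta> q = sc (1 / of_nat m) (sc (\<Sum>k<m. r ^ k) q)"
    by (simp add: eigenproj_def eigen_funpow[OF assms(2)] r_def power_mult_distrib scale_sum_left)
  ultimately show ?thesis
    using period_pos by (auto simp: geometric_sum)
qed

lemma sum_eigenproj: "(\<Sum>\<zeta> | \<zeta> ^ m = 1. eigenproj \<zeta> u) = u"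
proof -
  have "(\<Sum>\<zeta> | \<zeta> ^ m = 1. eigenproj \<zeta> u)
      = sc (1 / of_nat m) (\<Sum>k<m. sc (\<Sum>\<zeta> | \<zeta> ^ m = 1. inverse \<zeta> ^ k) ((P ^^ k) u))"
    unfolding eigenproj_def scale_sum_right[symmetric]
    by (subst sum.swap) (simp add: scale_sum_left)
  also have "(\<Sum>k<m. sc (\<Sum>\<zeta> | \<zeta> ^ m = 1. inverse \<zeta> ^ k) ((P ^^ k) u))
      = (\<Sum>k<m. if k = 0 then sc (of_nat m) u else 0)"
    by (rule sum.cong) (simp_all add: sum_roots_unity_inverse_power[OF period_pos])
  also have "sc (1 / of_nat m) \<dots> = u"
    using period_pos by (simp add: sum.delta)
  finally show ?thesis .
qed

lemma eigenproj_in_subspace_but_one: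
  assumes S: "subspace S" and u: "u \<in> S" and \<zeta>: "\<zeta> ^ m = 1"
    and others: "\<And>\<xi>. \<xi> ^ m = 1 \<Longrightarrow> \<xi> \<noteq> \<nu> \<Longrightarrow> eigenproj \<xi> u \<in> S"
  shows "eigenproj \<zeta> u \<in> S"
proof (cases "\<zeta> = \<nu>")
  case True
  have fin: "finite {\<xi> :: complex. \<xi> ^ m = 1}" using period_pos by (intro finite_roots_unity) simp
  have "eigenproj \<zeta> u = u - (\<Sum>\<xi> \<in> {\<xi>. \<xi> ^ m = 1} - {\<zeta>}. eigenproj \<xi> u)"
    using sum.remove[OF fin, of \<zeta> "\<lambda>\<xi>. eigenproj \<xi> u"] \<zeta> sum_eigenproj[of u] by (simp add: algebra_simps)
  also have "\<dots> \<in> S"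
    using True others by (intro subspace_diff[OF S u] subspace_sum[OF S]) auto
  finally show ?thesis .
qed (use others \<zeta> in simp)

lemma exists_eigen_notin_subspace:
  assumes "subspace S" "S \<noteq> UNIV"
  obtains \<mu> u where "eigen \<mu> u" "u \<notin> S"
proof -
  obtain u where u: "u \<notin> S" using assms(2) by blast
  have "\<exists>\<zeta>. \<zeta> ^ m = 1 \<and> eigenproj \<zeta> u \<notin> S"
  proof (rule ccontr)
    assume "\<not> ?thesis"
    then have "(\<Sum>\<zeta> | \<zeta> ^ m = 1. eigenproj \<zeta> u) \<in> S"
      by (intro subspace_sum[OF assms(1)]) auto
    then show False using u sum_eigenproj by simp
  qed
  then show ?thesis using that eigen_eigenproj by blast
qed

end

section \<open>Periodic prederivations\<close>

locale periodic_prederivation = lie_algebra sc br + periodic_linear_map sc P m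
  for sc :: "complex \<Rightarrow> 'v::ab_group_add \<Rightarrow> 'v" and br P m +
  assumes prederivation:
    "\<And>x y z. P (br x (br y z)) = br (P x) (br y z) + br x (br (P y) z) + br x (br y (P z))"
begin

lemma eigen_bracket_bracket:
  "eigen a x \<Longrightarrow> eigen b y \<Longrightarrow> eigen d z \<Longrightarrow> eigen (a + b + d) (br x (br y z))"
  by (simp add: eigen_def prederivation bracket_simps scale_left_distrib)

lemma prederivation_lcs2:
  assumes u: "u \<in> L 2"
  shows "P u \<in> L 2"
proof -
  have L2: "br r (br s t) \<in> L 2" for r s t
    using bracket_lcs_right[OF bracket_lcs_right[of t 0 s], of r] by (simp add: numeral_2_eq_2)
  have P_L1: "P (br a b) \<in> L 2" if "b \<in> L 1" for a b
  proof -
    have "subspace ((\<lambda>b. P (br a b)) -` L 2)"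
      using module_hom.subspace_vimage[OF module_hom_compose[OF module_hom_bracket_right module_hom_P]]
      by (simp add: o_def subspace_lcs)
    moreover have "{br p q | p q. q \<in> L 0} \<subseteq> (\<lambda>b. P (br a b)) -` L 2"
    proof
      fix v assume "v \<in> {br p q | p q. q \<in> L 0}"
      then obtain p q where "v = br p q" by blast
      then show "v \<in> (\<lambda>b. P (br a b)) -` L 2"
        using L2 by (simp add: prederivation subspace_add[OF subspace_lcs])
    qed
    ultimately show ?thesis
      using that span_minimal unfolding One_nat_def lcs_Suc_eq[of 0] by blast
  qed
  have "subspace (P -` L 2)"
    using module_hom.subspace_vimage[OF module_hom_P] by (simp add: subspace_lcs)
  moreover have "{br a b | a b. b \<in> L 1} \<subseteq> P -` L 2"
    using P_L1 by blast
  ultimately have "L (Suc 1) \<subseteq> P -` L 2"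
    unfolding lcs_Suc_eq[of 1] by (rule span_minimal[rotated])
  then show ?thesis
    using u by (auto simp: numeral_2_eq_2)
qed

lemma ad_eigen_pow4_zero:
  assumes z: "eigen \<alpha> z"
  shows "br z (br z (br z (br z u))) = 0"
proof (cases "z = 0")
  case False
  let ?ad4 = "\<lambda>p. br z (br z (br z (br z p)))"
  have component: "?ad4 (eigenproj \<zeta> u) = 0" if \<zeta>: "\<zeta> ^ m = 1" for \<zeta>
  proof (rule ccontr)
    define p where "p = eigenproj \<zeta> u"
    assume "?ad4 (eigenproj \<zeta> u) \<noteq> 0"
    then have ne4: "?ad4 p \<noteq> 0" and ne2: "br z (br z p) \<noteq> 0" and ne0: "p \<noteq> 0"
      by (auto simp: p_def)
    have p: "eigen \<zeta> p" using eigen_eigenproj[OF \<zeta>] p_def by simp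
    have e2: "eigen (\<alpha> + \<alpha> + \<zeta>) (br z (br z p))"
      by (rule eigen_bracket_bracket[OF z z p])
    have e4: "eigen (\<alpha> + \<alpha> + (\<alpha> + \<alpha> + \<zeta>)) (?ad4 p)"
      by (rule eigen_bracket_bracket[OF z z e2])
    have "norm \<zeta> = 1" "norm (\<zeta> + 2 * \<alpha>) = 1" "norm (\<zeta> + 2 * (2 * \<alpha>)) = 1"
      using eigen_norm[OF p ne0] eigen_norm[OF e2 ne2] eigen_norm[OF e4 ne4]
      by (simp_all add: algebra_simps)
    then have "2 * \<alpha> = 0" by (rule unit_circle_arith_progression)
    then show False using eigen_norm[OF z False] by simp
  qed
  have "?ad4 u = ?ad4 (\<Sum>\<zeta> | \<zeta> ^ m = 1. eigenproj \<zeta> u)" by (simp add: sum_eigenproj)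
  also have "\<dots> = (\<Sum>\<zeta> | \<zeta> ^ m = 1. ?ad4 (eigenproj \<zeta> u))" by (simp add: bracket_sum_right)
  also have "\<dots> = 0" using component by simp
  finally show ?thesis .
qed simp

lemma eigen_bracket_chain_zero:
  assumes x: "eigen \<alpha> x" and y: "eigen \<beta> y" and "\<alpha> + \<beta> \<noteq> 0"
  shows "br y (br x (br x (br x y))) = 0"
proof (rule ccontr)
  assume ne3: "br y (br x (br x (br x y))) \<noteq> 0"
  then have ne2: "br x (br x y) \<noteq> 0" and ne0: "x \<noteq> 0" by auto
  have e2: "eigen (\<alpha> + \<alpha> + \<beta>) (br x (br x y))"
    by (rule eigen_bracket_bracket[OF x x y])
  have e3: "eigen (\<beta> + \<alpha> + (\<alpha> + \<alpha> + \<beta>)) (br y (br x (br x (br x y))))"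
    by (rule eigen_bracket_bracket[OF y x e2])
  have "norm \<alpha> = 1" "norm (\<alpha> + (\<alpha> + \<beta>)) = 1" "norm (\<alpha> + 2 * (\<alpha> + \<beta>)) = 1"
    using eigen_norm[OF x ne0] eigen_norm[OF e2 ne2] eigen_norm[OF e3 ne3]
    by (simp_all add: algebra_simps)
  then have "\<alpha> + \<beta> = 0" by (rule unit_circle_arith_progression)
  then show False using assms(3) by simp
qed

end

locale filiform_periodic_prederivation =
  filiform_lie_algebra sc br Basis c + periodic_prederivation sc br P m
  for sc :: "complex \<Rightarrow> 'v::ab_group_add \<Rightarrow> 'v" and br Basis c P m +
  assumes five_le_class: "5 \<le> c"
begin

abbreviation C :: "nat \<Rightarrow> 'v set" where "C \<equiv> lcs_centralizer"

lemma ad_pow3_notin_lcs4: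
  assumes z: "z \<notin> C 1" "z \<notin> C 2" and y: "span (insert y (insert z (L 1))) = UNIV"
  shows "br z (br z (br z y)) \<notin> L 4"
proof -
  have w1: "br z y \<in> L 1" using bracket_lcs_right[of y 0 z] by simp
  have w2: "br z y \<notin> L 2" using bracket_generators_notin_lcs2[OF y] .
  have q2: "br z (br z y) \<notin> L 3"
    using bracket_notin_lcs_centralizer[of 1 z "br z y"] five_le_class z(1) w1 w2
    by (simp add: eval_nat_numeral)
  have q1: "br z (br z y) \<in> L 2" using bracket_lcs_right[OF w1] by (simp add: numeral_2_eq_2)
  show ?thesis
    using bracket_notin_lcs_centralizer[of 2 z "br z (br z y)"] five_le_class z(2) q1 q2
    by (simp add: eval_nat_numeral)
qed

lemma eigen_in_C3_if_notin_C2: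
  assumes z: "eigen \<gamma> z" "z \<notin> C 2"
  shows "z \<in> C 3"
proof (rule ccontr)
  assume z3: "z \<notin> C 3"
  have z1: "z \<notin> C 1" using z(2) lcs_centralizer_1_subset_2 by auto
  then have zL: "z \<notin> L 1" using lcs1_subset_lcs_centralizer by auto
  obtain y where "y \<notin> span (insert z (L 1))"
    using span_insert_lcs1_neq_UNIV[of z] by blast
  then have y: "span (insert y (insert z (L 1))) = UNIV"
    by (rule span_insert2_lcs1_eq_UNIV[OF zL])
  have "br z (br z (br z y)) \<in> L 3"
    using bracket_lcs_right[of "br z (br z y)" 2 z] bracket_lcs_right[of "br z y" 1 z]
      bracket_lcs_right[of y 0 z] by (simp add: eval_nat_numeral)
  then have "br z (br z (br z (br z y))) \<notin> L 5"
    using bracket_notin_lcs_centralizer[of 3 z "br z (br z (br z y))"] five_le_class z3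
      ad_pow3_notin_lcs4[OF z1 z(2) y] by (simp add: eval_nat_numeral)
  then show False
    using ad_eigen_pow4_zero[OF z(1)] by simp
qed

lemma span_insert2_lcs1_eq_UNIV_if_C:
  assumes x: "x \<notin> C 2" and y: "y \<in> C 2" "y \<notin> C 3"
  shows "span (insert y (insert x (L 1))) = UNIV"
proof (rule span_insert2_lcs1_eq_UNIV)
  show "x \<notin> L 1" using x lcs1_subset_lcs_centralizer by auto
  show "y \<notin> span (insert x (L 1))"
    using lcs_centralizer_span_insert[OF x y(1)] y(2) lcs1_subset_lcs_centralizer by auto
qed

lemma bracket_chain_notin_lcs5:
  assumes x: "x \<notin> C 2" and y: "y \<in> C 2" "y \<notin> C 3"
  shows "br y (br x (br x (br x y))) \<notin> L 5"
proof -
  have x1: "x \<notin> C 1" using x lcs_centralizer_1_subset_2 by auto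
  have "br x (br x (br x y)) \<in> L 3"
    using bracket_lcs_right[of "br x (br x y)" 2 x] bracket_lcs_right[of "br x y" 1 x]
      bracket_lcs_right[of y 0 x] by (simp add: eval_nat_numeral)
  then show ?thesis
    using bracket_notin_lcs_centralizer[of 3 y "br x (br x (br x y))"] five_le_class y(2)
      ad_pow3_notin_lcs4[OF x1 x span_insert2_lcs1_eq_UNIV_if_C[OF x y]]
    by (simp add: eval_nat_numeral)
qed

lemma eigenvalue_sum_zero:
  assumes "eigen \<alpha> x" "eigen \<beta> y" "x \<notin> C 2" "y \<in> C 2" "y \<notin> C 3"
  shows "\<alpha> + \<beta> = 0"
  using eigen_bracket_chain_zero[OF assms(1,2)] bracket_chain_notin_lcs5[OF assms(3-5)]
  by (metis zero_in_lcs)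

lemma in_lcs1_if_in_C2_C3:
  assumes x: "x \<notin> C 2" "x \<in> C 3" and z: "z \<in> C 2" "z \<in> C 3"
  shows "z \<in> L 1"
proof (rule ccontr)
  assume zL: "z \<notin> L 1"
  have xL: "x \<notin> L 1" using x lcs1_subset_lcs_centralizer by auto
  have "z \<notin> span (insert x (L 1))"
    using lcs_centralizer_span_insert[OF x(1) z(1)] zL by blast
  then have "span (insert z (insert x (L 1))) = UNIV"
    by (rule span_insert2_lcs1_eq_UNIV[OF xL])
  moreover have "span (insert z (insert x (L 1))) \<subseteq> C 3"
    using z x lcs1_subset_lcs_centralizer by (intro span_minimal subspace_lcs_centralizer) auto
  ultimately show False
    using lcs_centralizer_neq_UNIV[of 3] five_le_class by auto
qed

text \<open>\<open>g^2/g^3\<close> is a \<open>P\<close>-invariant line, so it carries a single eigenvalue.\<close>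

lemma eigen_lcs1_eigenvalue_unique:
  assumes a: "eigen \<mu> a" "a \<in> L 1" "a \<notin> L 2" and b: "eigen \<nu> b" "b \<in> L 1" "b \<notin> L 2"
  shows "\<mu> = \<nu>"
proof -
  obtain t where t: "b - sc t a \<in> L 2"
    using lcs_decompose[of 1 a b] three_le_class a b by (auto simp: numeral_2_eq_2)
  define r where "r = b - sc t a"
  have "P r - sc \<nu> r = sc (t * (\<nu> - \<mu>)) a"
    using a(1) b(1) by (simp add: r_def eigen_def P_diff P_scale algebra_simps scale_left_diff_distrib)
  moreover have "P r - sc \<nu> r \<in> L 2"
    using t prederivation_lcs2[of r] r_def
    by (simp add: subspace_diff[OF subspace_lcs] subspace_scale[OF subspace_lcs])
  ultimately have "sc (t * (\<nu> - \<mu>)) a \<in> L 2" by simp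
  moreover have "t \<noteq> 0" using t b(3) by auto
  ultimately show ?thesis
    using a(3) subspace_scale_iff[OF subspace_lcs[of 2], of "t * (\<nu> - \<mu>)" a] by auto
qed

lemma bracket_opposite_eigen_lcs1_in_lcs5:
  assumes a: "eigen \<mu> a" "a \<in> L 1" and b: "eigen (- \<mu>) b" "b \<in> L 1"
  shows "br a (br z b) \<in> L 5"
proof (cases "a \<in> L 2")
  case True
  then show ?thesis
    using bracket_lcs_lcs[OF True bracket_lcs_right[OF b(2), of z]] by (simp add: eval_nat_numeral)
next
  case a2: False
  show ?thesis
  proof (cases "b \<in> L 2")
    case True
    then show ?thesis
      using bracket_lcs_lcs[OF a(2) bracket_lcs_right[OF True, of z]] by (simp add: eval_nat_numeral)
  next
    case False
    have "\<mu> = - \<mu>" by (rule eigen_lcs1_eigenvalue_unique[OF a a2 b False])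
    moreover have "a \<noteq> 0" using a2 by auto
    ultimately show ?thesis using eigen_norm[OF a(1)] by simp
  qed
qed

lemma bracket_pair_notin_lcs5:
  assumes x: "x \<notin> C 2" and y: "y \<in> C 2" "y \<notin> C 3"
  shows "br (br x y) (br x (br x y)) \<notin> L 5"
proof
  define v where "v = br x (br x y)"
  assume "br (br x y) v \<in> L 5"
  moreover have "br x (br y v) \<in> L 5"
  proof -
    have "v \<in> L 2"
      using bracket_lcs_right[OF bracket_lcs_right[of y 0 x], of x] by (simp add: v_def numeral_2_eq_2)
    then have "br y v \<in> L 4"
      using y(1) unfolding lcs_centralizer_def by (simp add: eval_nat_numeral)
    then show ?thesis
      using bracket_lcs_right[of "br y v" 4 x] by (simp add: eval_nat_numeral)
  qed
  ultimately have "br x (br y v) - br (br x y) v \<in> L 5"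
    by (simp add: subspace_diff[OF subspace_lcs])
  then show False
    using bracket_chain_notin_lcs5[OF x y] by (simp add: jacobi_left v_def)
qed

context
  fixes x y :: 'v and \<alpha> :: complex
  assumes x: "eigen \<alpha> x" "x \<notin> C 2" and y: "eigen (- \<alpha>) y" "y \<in> C 2" "y \<notin> C 3"
begin

lemma eigenproj_lcs1_in_lcs1:
  assumes w: "w \<in> L 1" and \<zeta>: "\<zeta> ^ m = 1"
  shows "eigenproj \<zeta> w \<in> L 1"
proof (rule in_lcs1_if_in_C2_C3[OF x(2) eigen_in_C3_if_notin_C2[OF x]])
  show "eigenproj \<zeta> w \<in> C 2"
  proof (rule eigenproj_in_subspace_but_one[OF subspace_lcs_centralizer _ \<zeta>])
    show "w \<in> C 2" using w lcs1_subset_lcs_centralizer by auto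
    show "eigenproj \<xi> w \<in> C 2" if "\<xi> ^ m = 1" "\<xi> \<noteq> \<alpha>" for \<xi>
      using eigenvalue_sum_zero[OF eigen_eigenproj[OF that(1)] y(1) _ y(2,3)] that(2) by auto
  qed
  show "eigenproj \<zeta> w \<in> C 3"
  proof (rule eigenproj_in_subspace_but_one[OF subspace_lcs_centralizer _ \<zeta>])
    show "w \<in> C 3" using w lcs1_subset_lcs_centralizer by auto
    show "eigenproj \<xi> w \<in> C 3" if "\<xi> ^ m = 1" "\<xi> \<noteq> - \<alpha>" for \<xi>
      using eigenvalue_sum_zero[OF x(1) eigen_eigenproj[OF that(1)] x(2)]
        eigen_in_C3_if_notin_C2[OF eigen_eigenproj[OF that(1)]] that(2)
      by (auto simp: add_eq_0_iff)
  qed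
qed

text \<open>Write \<open>w = [x, y] = \<Sum> w\<^sub>\<zeta>\<close> with \<open>w\<^sub>\<zeta>\<close> a \<open>\<zeta>\<close>-eigenvector in \<open>g^2\<close>. The \<open>\<alpha>\<close>-eigenvector
  \<open>[w, [x, w]]\<close> equals its \<open>\<alpha>\<close>-component, the sum of the terms \<open>[w\<^sub>\<zeta>, [x, w\<^sub>-\<^sub>\<zeta>]]\<close>, and each of these
  lies in \<open>g^6\<close> since at most one eigencomponent of \<open>w\<close> lies outside \<open>g^3\<close>.\<close>

lemma bracket_eigen_pair_in_lcs5: "br (br x y) (br x (br x y)) \<in> L 5"
proof -
  define w where "w = br x y"
  define W where "W \<zeta> = eigenproj \<zeta> w" for \<zeta>
  let ?R = "{\<zeta> :: complex. \<zeta> ^ m = 1}"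
  have w1: "w \<in> L 1" using bracket_lcs_right[of y 0 x] by (simp add: w_def)
  have \<alpha>: "\<alpha> ^ m = 1"
    using eigen_root_of_unity[OF x(1)] x(2) subspace_0[OF subspace_lcs_centralizer] by auto
  have v: "eigen (\<alpha> + \<alpha> + - \<alpha>) (br x w)"
    using eigen_bracket_bracket[OF x(1) x(1) y(1)] by (simp add: w_def)
  have "eigen \<alpha> (br x (br y (br x w)))" "eigen \<alpha> (br y (br x (br x w)))"
    using eigen_bracket_bracket[OF x(1) y(1) v] eigen_bracket_bracket[OF y(1) x(1) v] by simp_all
  then have "eigen \<alpha> (br w (br x w))"
    using eigen_diff by (simp add: w_def jacobi_left)
  then have "br w (br x w) = eigenproj \<alpha> (br w (br x w))"
    by (simp add: eigenproj_eigen[OF \<alpha>])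
  also have "\<dots> = eigenproj \<alpha> (br (\<Sum>\<zeta>\<in>?R. W \<zeta>) (br x (\<Sum>\<xi>\<in>?R. W \<xi>)))"
    by (simp only: W_def sum_eigenproj)
  also have "\<dots> = (\<Sum>\<xi>\<in>?R. \<Sum>\<zeta>\<in>?R. eigenproj \<alpha> (br (W \<zeta>) (br x (W \<xi>))))"
    by (simp add: bracket_sum_left bracket_sum_right module_hom.sum[OF module_hom_eigenproj])
  also have "\<dots> \<in> L 5"
  proof (intro subspace_sum[OF subspace_lcs])
    fix \<xi> \<zeta> assume "\<xi> \<in> ?R" "\<zeta> \<in> ?R"
    then have W: "eigen \<zeta> (W \<zeta>)" "W \<zeta> \<in> L 1" "eigen \<xi> (W \<xi>)" "W \<xi> \<in> L 1"
      using eigen_eigenproj eigenproj_lcs1_in_lcs1[OF w1] by (simp_all add: W_def)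
    have "eigen (\<zeta> + \<alpha> + \<xi>) (br (W \<zeta>) (br x (W \<xi>)))"
      by (rule eigen_bracket_bracket[OF W(1) x(1) W(3)])
    moreover have "br (W \<zeta>) (br x (W \<xi>)) \<in> L 5" if "\<zeta> + \<alpha> + \<xi> = \<alpha>"
    proof -
      have "\<xi> = - \<zeta>" using that by (simp add: eq_neg_iff_add_eq_0 add.commute)
      then show ?thesis
        using bracket_opposite_eigen_lcs1_in_lcs5[OF W(1,2)] W(3,4) by simp
    qed
    ultimately show "eigenproj \<alpha> (br (W \<zeta>) (br x (W \<xi>))) \<in> L 5"
      by (simp add: eigenproj_eigen[OF \<alpha>])
  qed
  finally show ?thesis by (simp add: w_def)
qed

end

lemma inconsistent: False
proof -
  obtain \<alpha> x where x: "eigen \<alpha> x" "x \<notin> C 2"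
    using exists_eigen_notin_subspace[OF subspace_lcs_centralizer lcs_centralizer_neq_UNIV[of 2]]
      five_le_class by auto
  obtain \<beta> y where y: "eigen \<beta> y" "y \<notin> C 3"
    using exists_eigen_notin_subspace[OF subspace_lcs_centralizer lcs_centralizer_neq_UNIV[of 3]]
      five_le_class by auto
  have y2: "y \<in> C 2" using eigen_in_C3_if_notin_C2[OF y(1)] y(2) by blast
  have "\<beta> = - \<alpha>" using eigenvalue_sum_zero[OF x(1) y(1) x(2) y2 y(2)] by (simp add: add_eq_0_iff)
  then show False
    using bracket_eigen_pair_in_lcs5[OF x] bracket_pair_notin_lcs5[OF x(2) y2 y(2)] y y2 by simp
qed

end

lemma lie_algebra_if_complex_lie_algebra:
  "complex_lie_algebra sc br \<Longrightarrow> lie_algebra sc br"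
  unfolding complex_lie_algebra_def by (intro lie_algebra.intro lie_algebra_axioms.intro) auto

lemma finite_dimensional_if_finite_dim:
  fixes sc :: "complex \<Rightarrow> 'v::ab_group_add \<Rightarrow> 'v"
  assumes "vector_space sc" "finite_dim sc"
  obtains Basis where "finite_dimensional_vector_space sc Basis"
proof -
  interpret vector_space sc by (rule assms(1))
  obtain B where "finite B" "span B = UNIV"
    using assms(2) unfolding finite_dim_def by blast
  moreover obtain Basis where "independent Basis" "span Basis = UNIV"
    using basis_exists[of UNIV] by (metis top.extremum_uniqueI)
  ultimately have "finite Basis"
    using independent_span_bound[of B Basis] by auto
  then show ?thesis
    using that \<open>independent Basis\<close> \<open>span Basis = UNIV\<close>
    by (simp add: finite_dimensional_vector_space_def finite_dimensional_vector_space_axioms_def assms(1))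
qed

theorem corollary5p12:
  fixes sc :: "complex \<Rightarrow> 'v::ab_group_add \<Rightarrow> 'v"
    and br :: "'v \<Rightarrow> 'v \<Rightarrow> 'v"
    and c :: nat
  assumes "complex_lie_algebra sc br"
    and "finite_dim sc"
    and "filiform sc br"
    and "nilpotency_class sc br c"
    and "c \<ge> 5"
  shows "\<not> (\<exists>P. prederivation sc br P \<and> periodic P)"
proof
  assume "\<exists>P. prederivation sc br P \<and> periodic P"
  then obtain P m where P: "prederivation sc br P" and m: "1 \<le> m" "P ^^ m = id"
    unfolding periodic_def by blast
  interpret lie_algebra sc br
    using assms(1) by (rule lie_algebra_if_complex_lie_algebra)
  obtain Basis where Basis: "finite_dimensional_vector_space sc Basis"
    using vector_space_axioms assms(2) by (rule finite_dimensional_if_finite_dim)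
  have "c = vector_space.dim sc UNIV - 1"
    using nilpotency_class_unique[OF assms(4)] assms(3) unfolding filiform_def by blast
  then have "filiform_lie_algebra sc br Basis c"
    using Basis assms(4,5)
    by (intro filiform_lie_algebra.intro filiform_lie_algebra_axioms.intro lie_algebra_axioms) simp_all
  moreover have "periodic_prederivation sc br P m"
    using P m
    by (intro periodic_prederivation.intro periodic_linear_map.intro periodic_linear_map_axioms.intro
        periodic_prederivation_axioms.intro lie_algebra_axioms vector_space_axioms)
      (simp_all add: prederivation_def)
  ultimately interpret filiform_periodic_prederivation sc br Basis c P m
    using assms(5) by (intro filiform_periodic_prederivation.intro filiform_periodic_prederivation_axioms.intro)
  show False by (rule inconsistent)
qed

end
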